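(* Let $T_3(n)=2^n-1$ for all integers $n\ge 0$. Define $T_4:\mathbb{Z}_{\ge 0}\to\mathbb{Z}_{\ge 0}$ by $T_4(0)=0$, $T_4(1)=1$, and for $n\ge 2$, \[ T_4(n)=\min_{1\le k<n}\bigl(2\,T_4(n-k)+T_3(k)\bigr). \] For $n\ge 1$ define the balanced Frame--Stewart cost \[ FS_{\lfloor n/2\rfloor}(n)=2\,T_4(\lfloor n/2\rfloor)+T_3\bigl(n-\lfloor n/2\rfloor\bigr). \] Then $FS_{\lfloor n/2\rfloor}(n)=T_4(n)$ for every $1\le n\le 8$, and $FS_{\lfloor n/2\rfloor}(n)>T_4(n)$ for every $n\ge 9$.
   Context: $T_3(n)$ is the minimum number of moves for the three-peg Tower of Hanoi with $n$ discs, and $T_4(n)$ is the minimum number of moves for the four-peg Tower of Hanoi with $n$ discs; the latter is given by the Frame--Stewart recurrence stated in the claim (optimality of this recurrence for four pegs is a known result of Bousch). $FS_{\lfloor n/2\rfloor}(n)$ is the cost of the Frame--Stewart strategy that parks $\lfloor n/2\rfloor$ discs using four pegs, moves the remaining $n-\lfloor n/2\rfloor$ discs with three pegs, and then rebuilds the parked discs. *)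

theory Defs
  imports Main
begin

definition T3 :: "nat \<Rightarrow> nat" where
  "T3 n = 2 ^ n - 1"

function T4 :: "nat \<Rightarrow> nat" where
  "T4 n = (if n = 0 then 0 else if n = 1 then 1
           else Min ((\<lambda>k. 2 * T4 (n - k) + T3 k) ` {1..<n}))"
  by auto
termination
  by (relation "measure id") auto

definition FS_balanced :: "nat \<Rightarrow> nat" where
  "FS_balanced n = 2 * T4 (n div 2) + T3 (n - n div 2)"

end

theory Submission
  imports Defs
begin

text \<open>Splitting off k = 2 discs in the Frame--Stewart recurrence gives
  T4 (n + 2) + 3 \<le> 2 (T4 n + 3), so T4 n + 3 at most doubles when n grows by two; from
  the table values at n = 13, 14 this yields T4 n \<le> 2^\<lceil>n/2\<rceil> - 3 for n \<ge> 13. The balanced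
  cost already contains the term T3 \<lceil>n/2\<rceil> = 2^\<lceil>n/2\<rceil> - 1, so it exceeds T4 n. The
  remaining cases n \<le> 12 are read off the table of values of T4.\<close>

declare T4.simps [simp del]

lemma T4_0 [simp]: "T4 0 = 0"
  by (simp add: T4.simps)

lemma T4_1 [simp]: "T4 (Suc 0) = 1"
  by (simp add: T4.simps)

text \<open>The candidate splits are listed explicitly so that the simplifier can enumerate them.\<close>
lemma T4_unfold: "2 \<le> n \<Longrightarrow> T4 n = Min ((\<lambda>k. 2 * T4 (n - k) + T3 k) ` set [1..<n])"
  by (subst T4.simps) simp

lemma T4_le_split: "0 < k \<Longrightarrow> k < n \<Longrightarrow> T4 n \<le> 2 * T4 (n - k) + T3 k"
  by (subst T4.simps) (auto intro!: Min_le)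

lemma T4_add_le: "0 < n \<Longrightarrow> 0 < k \<Longrightarrow> T4 (n + k) + T3 k \<le> 2 * (T4 n + T3 k)"
  using T4_le_split [of k "n + k"] by simp

lemma T4_2 [simp]: "T4 2 = 3" by (simp only: T4_unfold) (simp add: upt_rec T3_def del: set_upt)
lemma T4_3 [simp]: "T4 3 = 5" by (simp only: T4_unfold) (simp add: upt_rec T3_def del: set_upt)
lemma T4_4 [simp]: "T4 4 = 9" by (simp only: T4_unfold) (simp add: upt_rec T3_def del: set_upt)
lemma T4_5 [simp]: "T4 5 = 13" by (simp only: T4_unfold) (simp add: upt_rec T3_def del: set_upt)
lemma T4_6 [simp]: "T4 6 = 17" by (simp only: T4_unfold) (simp add: upt_rec T3_def del: set_upt)
lemma T4_7 [simp]: "T4 7 = 25" by (simp only: T4_unfold) (simp add: upt_rec T3_def del: set_upt)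
lemma T4_8 [simp]: "T4 8 = 33" by (simp only: T4_unfold) (simp add: upt_rec T3_def del: set_upt)
lemma T4_9 [simp]: "T4 9 = 41" by (simp only: T4_unfold) (simp add: upt_rec T3_def del: set_upt)
lemma T4_10 [simp]: "T4 10 = 49" by (simp only: T4_unfold) (simp add: upt_rec T3_def del: set_upt)
lemma T4_11 [simp]: "T4 11 = 65" by (simp only: T4_unfold) (simp add: upt_rec T3_def del: set_upt)
lemma T4_12 [simp]: "T4 12 = 81" by (simp only: T4_unfold) (simp add: upt_rec T3_def del: set_upt)
lemma T4_13 [simp]: "T4 13 = 97" by (simp only: T4_unfold) (simp add: upt_rec T3_def del: set_upt)
lemma T4_14 [simp]: "T4 14 = 113" by (simp only: T4_unfold) (simp add: upt_rec T3_def del: set_upt)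

lemma T4_plus_3_le_power: "13 \<le> n \<Longrightarrow> T4 n + 3 \<le> 2 ^ ((n + 1) div 2)"
proof (induction n rule: less_induct)
  case (less n)
  show ?case
  proof (cases "n \<le> 14")
    case True
    with less.prems have "n = 13 \<or> n = 14" by auto
    then show ?thesis by auto
  next
    case False
    then obtain m where n: "n = m + 2" and "13 \<le> m"
      by (intro that [of "n - 2"]) auto
    have "T4 n + 3 \<le> 2 * (T4 m + 3)"
      using T4_add_le [of m 2] \<open>13 \<le> m\<close> by (simp add: n T3_def)
    also have "\<dots> \<le> 2 * 2 ^ ((m + 1) div 2)"
      using less.IH [of m] \<open>13 \<le> m\<close> by (simp add: n)
    also have "\<dots> = 2 ^ ((n + 1) div 2)"
      by (simp add: n)
    finally show ?thesis .
  qed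
qed

lemma T3_ceiling_half_le_FS_balanced: "T3 ((n + 1) div 2) \<le> FS_balanced n"
proof -
  have "n - n div 2 = (n + 1) div 2" by auto
  then show ?thesis by (simp add: FS_balanced_def)
qed

theorem lemma3:
  shows "(\<forall>n::nat. 1 \<le> n \<and> n \<le> 8 \<longrightarrow> FS_balanced n = T4 n)
       \<and> (\<forall>n::nat. 9 \<le> n \<longrightarrow> FS_balanced n > T4 n)"
proof (intro conjI allI impI)
  fix n :: nat
  assume "1 \<le> n \<and> n \<le> 8"
  then have "n \<in> {1, 2, 3, 4, 5, 6, 7, 8}" by auto
  then show "FS_balanced n = T4 n"
    by (auto simp: FS_balanced_def T3_def)
next
  fix n :: nat
  assume "9 \<le> n"
  then consider "n \<in> {9, 10, 11, 12}" | "13 \<le> n" by fastforce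
  then show "FS_balanced n > T4 n"
  proof cases
    case 1
    then show ?thesis by (auto simp: FS_balanced_def T3_def)
  next
    case 2
    then have "T4 n + 3 \<le> 2 ^ ((n + 1) div 2)" by (rule T4_plus_3_le_power)
    moreover have "2 ^ ((n + 1) div 2) - 1 \<le> FS_balanced n"
      using T3_ceiling_half_le_FS_balanced [of n] by (simp add: T3_def)
    ultimately show ?thesis by linarith
  qed
qed
end
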